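(* Let $\mathcal M=(G,In,Out,Leak)$ be a linear compartmental model with compartmental matrix $A$, and let $i,j$ be distinct compartments with $i\ne1$ and $j\ne1$. Then $$\det\big((\lambda I-A)^{\{1,i\},\{1,j\}}\big)=\lambda^{-1}\det\big((\lambda I-A^*_1)^{i,j}\big).$$
   Context: A linear compartmental model $\mathcal M=(G,In,Out,Leak)$ consists of a finite directed graph $G=(V_G,E_G)$ without multi-edges, compartments $V_G=\{1,\dots,n\}$, and subsets $In,Out,Leak\subseteq V_G$; edge $q\to p$ carries parameter $a_{pq}$ and each $p\in Leak$ carries $a_{0p}$. The compartmental matrix $A$ has $A_{pp}=-\sum_{k:\,p\to k\in E_G}a_{kp}$ (minus $a_{0p}$ if $p\in Leak$), $A_{pq}=a_{pq}$ if $q\to p\in E_G$, $0$ otherwise. $A^*_1$ is the matrix obtained from $A$ by replacing its first column by zeros. For a matrix $B$, $B^{i,j}$ removes row $i$ and column $j$, and $B^{\{1,i\},\{1,j\}}$ removes rows $1,i$ and columns $1,j$. $\lambda$ is an indeterminate. *)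

theory Defs
  imports "Jordan_Normal_Form.Determinant" "HOL-Computational_Algebra.Polynomial"
begin

text \<open>An edge q -> p is the pair (q,p) in E.
  The parameter a_pq is a p q, the leak parameter a_0p is a 0 p.
  Parameters live in an arbitrary commutative ring (e.g. a polynomial ring
  of indeterminates).  Compartment p corresponds to matrix row/column p-1.\<close>

definition lin_comp_model ::
  "nat \<Rightarrow> (nat \<times> nat) set \<Rightarrow> nat set \<Rightarrow> nat set \<Rightarrow> nat set \<Rightarrow> bool" where
  "lin_comp_model n E In Out Leak \<longleftrightarrow>
     E \<subseteq> {1..n} \<times> {1..n} \<and> In \<subseteq> {1..n} \<and> Out \<subseteq> {1..n} \<and> Leak \<subseteq> {1..n}"

definition comp_matrix ::
  "nat \<Rightarrow> (nat \<times> nat) set \<Rightarrow> nat set \<Rightarrow> (nat \<Rightarrow> nat \<Rightarrow> 'a::comm_ring_1) \<Rightarrow> 'a mat" where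
  "comp_matrix n E Leak a = mat n n (\<lambda>(r, c).
     (let p = Suc r; q = Suc c in
      if p = q then
        - (\<Sum>k\<in>{k. (p, k) \<in> E}. a k p) - (if p \<in> Leak then a 0 p else 0)
      else if (q, p) \<in> E then a p q else 0))"

definition zero_first_col :: "'a::zero mat \<Rightarrow> 'a mat" where
  "zero_first_col A = mat (dim_row A) (dim_col A) (\<lambda>(r, c). if c = 0 then 0 else A $$ (r, c))"

definition lamI_minus :: "'a::comm_ring_1 mat \<Rightarrow> 'a poly mat" where
  "lamI_minus A = [:0, 1:] \<cdot>\<^sub>m 1\<^sub>m (dim_row A) - map_mat (\<lambda>x. [:x:]) A"

definition del_rc :: "'a mat \<Rightarrow> nat \<Rightarrow> nat \<Rightarrow> 'a mat" where
  "del_rc B i j = mat_delete B (i - 1) (j - 1)"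

definition del_rc2 :: "'a mat \<Rightarrow> nat \<Rightarrow> nat \<Rightarrow> 'a mat" where
  "del_rc2 B i j = mat_delete (mat_delete B (i - 1) (j - 1)) 0 0"

end

theory Submission
  imports Defs
begin

(* Zeroing the first column of A turns the first column of \<lambda>I - A into \<lambda>e_1. For i, j \<noteq> 1
   this column survives in (\<lambda>I - A*_1)^{i,j}, so Laplace expansion along it gives \<lambda> times the
   minor obtained by also deleting row and column 1, which no longer sees the first column and is
   therefore the corresponding minor of \<lambda>I - A. This works for any square A and needs no i \<noteq> j. *)

lemma comp_matrix_carrier: "comp_matrix n E Leak a \<in> carrier_mat n n"
  by (simp add: comp_matrix_def)

lemma zero_first_col_carrier: "A \<in> carrier_mat m n \<Longrightarrow> zero_first_col A \<in> carrier_mat m n"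
  by (simp add: zero_first_col_def)

lemma lamI_minus_carrier: "A \<in> carrier_mat n n \<Longrightarrow> lamI_minus A \<in> carrier_mat n n"
  by (auto simp: lamI_minus_def)

lemma index_lamI_minus_zero_first_col:
  assumes "A \<in> carrier_mat n n" and "r < n" and "c < n"
  shows "lamI_minus (zero_first_col A) $$ (r, c) =
    (if c = 0 then (if r = 0 then [:0, 1:] else 0) else lamI_minus A $$ (r, c))"
  using assms by (auto simp: lamI_minus_def zero_first_col_def)

lemma det_single_entry_column:
  fixes A :: "'a::comm_ring_1 mat"
  assumes A: "A \<in> carrier_mat n n" and r: "r < n" and k: "k < n"
    and zero: "\<And>r'. r' < n \<Longrightarrow> r' \<noteq> r \<Longrightarrow> A $$ (r', k) = 0"
  shows "det A = A $$ (r, k) * cofactor A r k"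
proof -
  have "det A = (\<Sum>r'<n. A $$ (r', k) * cofactor A r' k)"
    by (rule laplace_expansion_column[OF A k])
  also have "\<dots> = A $$ (r, k) * cofactor A r k
      + (\<Sum>r'\<in>{..<n} - {r}. A $$ (r', k) * cofactor A r' k)"
    using r by (subst sum.remove[of _ r]) auto
  also have "(\<Sum>r'\<in>{..<n} - {r}. A $$ (r', k) * cofactor A r' k) = 0"
    by (rule sum.neutral) (auto simp: zero)
  finally show ?thesis by simp
qed

lemma det_del_rc_lamI_minus_zero_first_col:
  fixes A :: "'a::comm_ring_1 mat"
  assumes A: "A \<in> carrier_mat n n" and i: "1 < i" "i \<le> n" and j: "1 < j" "j \<le> n"
  shows "det (del_rc (lamI_minus (zero_first_col A)) i j) = [:0, 1:] * det (del_rc2 (lamI_minus A) i j)"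
proof -
  define M where "M = lamI_minus (zero_first_col A)"
  define D where "D = del_rc M i j"
  have M: "M \<in> carrier_mat n n"
    unfolding M_def by (intro lamI_minus_carrier zero_first_col_carrier A)
  have N: "lamI_minus A \<in> carrier_mat n n" by (rule lamI_minus_carrier[OF A])
  have D: "D \<in> carrier_mat (n - 1) (n - 1)"
    unfolding D_def del_rc_def by (rule mat_delete_carrier[OF M])
  have n: "0 < n - 1" using i by simp
  have first_col: "D $$ (r, 0) = (if r = 0 then [:0, 1:] else 0)" if "r < n - 1" for r
    using that i j M
    by (auto simp: D_def del_rc_def mat_delete_def M_def index_lamI_minus_zero_first_col[OF A])
  have minor: "mat_delete D 0 0 = del_rc2 (lamI_minus A) i j"
    using i j M N
    by (intro eq_matI) (auto simp: D_def del_rc_def del_rc2_def mat_delete_def M_def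
        index_lamI_minus_zero_first_col[OF A])
  have "det D = D $$ (0, 0) * cofactor D 0 0"
    by (rule det_single_entry_column[OF D n n]) (simp add: first_col)
  also have "\<dots> = [:0, 1:] * det (del_rc2 (lamI_minus A) i j)"
    using n by (simp add: first_col cofactor_def minor)
  finally show ?thesis by (simp add: D_def M_def)
qed

theorem lemma3p10:
  fixes n :: nat and E :: "(nat \<times> nat) set" and In Out Leak :: "nat set"
    and a :: "nat \<Rightarrow> nat \<Rightarrow> 'a::comm_ring_1" and i j :: nat
  assumes "lin_comp_model n E In Out Leak"
    and "i \<in> {1..n}" and "j \<in> {1..n}" and "i \<noteq> j" and "i \<noteq> 1" and "j \<noteq> 1"
  shows "det (del_rc (lamI_minus (zero_first_col (comp_matrix n E Leak a))) i j)
       = [:0, 1:] * det (del_rc2 (lamI_minus (comp_matrix n E Leak a)) i j)"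
  by (rule det_del_rc_lamI_minus_zero_first_col[OF comp_matrix_carrier]) (use assms in auto)

end
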